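(* Let $S$ be a standard tableau of type $(i_1,\dots,i_m)$ and $D(S)$ its dependence graph. (a) If $B$ is a black arc of $D(S)$ with $b(B)>1$, then there is a black arc sequence from $s(B)+1$ to $t(B)-1$. (b) Let $B$ be a green arc of $D(S)$ with $b(B)>1$. If there is no green arc other than $B$ nested inside $B$, then there is a black arc sequence from $0$ to $t(B)-1$. If there is a green arc other than $B$ nested inside $B$, then there is a black arc sequence from the rightmost endpoint of the green arcs (other than $B$) nested inside $B$ to $t(B)-1$.
   Context: Setting: $n\ge2k\ge0$, $0<i_1<\dots<i_m=n$. A standard tableau of type $(i_1,\dots,i_m)$ is a two-row Young diagram (top row $n-k$ boxes, bottom $k$) in which $i_l$ occurs exactly $i_l-i_{l-1}$ times ($i_0=0$), entries strictly decreasing along rows and each column's top entry $\ge$ its bottom entry. Double entries are $i_l$ with $i_l-i_{l-1}=2$ (in both rows). Weight sequence $a_1\dots a_n$: $a_{i-1}=a_i=\times$ if $i$ is a double entry, otherwise $a_i=\wedge$ if $i$ is in the top row and $a_i=\vee$ if in the bottom row. Extended cup diagram $eC(S)$: prepend $n-2k$ points labelled $\vee$ at positions $-(n-2k)+1,\dots,0$ to the weight sequence (positions $1,\dots,n$), and repeatedly join by a cup any $\vee\wedge$ pair (in this order) that is adjacent after ignoring $\times$'s and already joined points; cups starting at an added point are green, the others black. Dependence graph $D(S)$: nodes numbered $-(n-2k),\dots,0$ and $i_1,\dots,i_m$. For each double entry $i_s$ there is a black arc from $i_s-2$ to $i_s$ labelled $N^{-1}$; for each cup of $eC(S)$ joining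 $i<j$ there is an arc of the same colour from $i-1$ to $j$, labelled $N^{-l}$ if black and $e_l$ if green, $l=\frac12(j-i+1)$. For an arc $B$, $s(B)$ and $t(B)$ are the numbers of its left and right endpoint nodes and $b(B)=\frac12(t(B)-s(B))$. An arc $B'$ is nested inside $B$ if $s(B)\le s(B')<t(B')\le t(B)$. An arc sequence from $a$ to $b$ is a sequence of arcs $B_1,\dots,B_r$ with $s(B_1)=a$, $t(B_r)=b$, $t(B_i)=s(B_{i+1})$; it is black if all $B_i$ are black. *)

theory Defs
  imports Complex_Main
begin

datatype wt = Vee | Wedge | Cross
datatype colour = Black | Green

text \<open>Type (i_1,...,i_m) as a list; i_0 = 0.\<close>
definition type_seq :: "nat \<Rightarrow> nat list \<Rightarrow> bool" where
  "type_seq n is \<longleftrightarrow> is \<noteq> [] \<and> sorted_wrt (<) is \<and> 0 < hd is \<and> last is = n"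

definition prev_entry :: "nat list \<Rightarrow> nat \<Rightarrow> nat" where
  "prev_entry is l = (if l = 0 then 0 else is ! (l - 1))"

text \<open>Standard tableau: trow row (n-k boxes, left to right) and bottom row (k boxes).\<close>
definition std_tableau :: "nat \<Rightarrow> nat \<Rightarrow> nat list \<Rightarrow> nat list \<Rightarrow> nat list \<Rightarrow> bool" where
  "std_tableau n k is trow brow \<longleftrightarrow>
     type_seq n is \<and> length trow = n - k \<and> length brow = k \<and>
     set trow \<union> set brow \<subseteq> set is \<and>
     (\<forall>l < length is. count_list (trow @ brow) (is ! l) = is ! l - prev_entry is l) \<and>
     sorted_wrt (>) trow \<and> sorted_wrt (>) brow \<and>
     (\<forall>j < k. brow ! j \<le> trow ! j)"

definition double_entry :: "nat list \<Rightarrow> nat \<Rightarrow> bool" where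
  "double_entry is x \<longleftrightarrow> (\<exists>l < length is. is ! l = x \<and> is ! l - prev_entry is l = 2)"

definition weight :: "nat list \<Rightarrow> nat list \<Rightarrow> nat list \<Rightarrow> nat \<Rightarrow> wt" where
  "weight is trow brow p =
     (if double_entry is p \<or> double_entry is (p + 1) then Cross
      else if p \<in> set trow then Wedge
      else if p \<in> set brow then Vee else Cross)"

text \<open>Extended weight: added points -(n-2k)+1..0 are labelled Vee.\<close>
definition ext_weight :: "nat list \<Rightarrow> nat list \<Rightarrow> nat list \<Rightarrow> int \<Rightarrow> wt" where
  "ext_weight is trow brow p = (if p \<le> 0 then Vee else weight is trow brow (nat p))"

definition joined :: "(int \<times> int) set \<Rightarrow> int \<Rightarrow> bool" where
  "joined C p \<longleftrightarrow> (\<exists>q. (p, q) \<in> C \<or> (q, p) \<in> C)"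

definition cup_step :: "nat \<Rightarrow> nat \<Rightarrow> nat list \<Rightarrow> nat list \<Rightarrow> nat list
    \<Rightarrow> (int \<times> int) set \<Rightarrow> (int \<times> int) set \<Rightarrow> bool" where
  "cup_step n k is trow brow C C' \<longleftrightarrow>
     (\<exists>i j. - int (n - 2 * k) + 1 \<le> i \<and> i < j \<and> j \<le> int n \<and>
        ext_weight is trow brow i = Vee \<and> ext_weight is trow brow j = Wedge \<and>
        \<not> joined C i \<and> \<not> joined C j \<and>
        (\<forall>p. i < p \<and> p < j \<longrightarrow> ext_weight is trow brow p = Cross \<or> joined C p) \<and>
        C' = insert (i, j) C)"

definition final_cups :: "nat \<Rightarrow> nat \<Rightarrow> nat list \<Rightarrow> nat list \<Rightarrow> nat list
    \<Rightarrow> (int \<times> int) set \<Rightarrow> bool" where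
  "final_cups n k is trow brow C \<longleftrightarrow>
     (cup_step n k is trow brow)\<^sup>*\<^sup>* {} C \<and> \<not> (\<exists>C'. cup_step n k is trow brow C C')"

definition is_cup :: "nat \<Rightarrow> nat \<Rightarrow> nat list \<Rightarrow> nat list \<Rightarrow> nat list \<Rightarrow> int \<Rightarrow> int \<Rightarrow> bool" where
  "is_cup n k is trow brow i j \<longleftrightarrow> (\<exists>C. final_cups n k is trow brow C \<and> (i, j) \<in> C)"

text \<open>Arcs: (left endpoint s(B), right endpoint t(B), colour). Labels are omitted.\<close>
type_synonym arc = "int \<times> int \<times> colour"

definition src :: "arc \<Rightarrow> int" where "src B = fst B"
definition tgt :: "arc \<Rightarrow> int" where "tgt B = fst (snd B)"
definition col :: "arc \<Rightarrow> colour" where "col B = snd (snd B)"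

definition bval :: "arc \<Rightarrow> real" where "bval B = real_of_int (tgt B - src B) / 2"

definition dep_arcs :: "nat \<Rightarrow> nat \<Rightarrow> nat list \<Rightarrow> nat list \<Rightarrow> nat list \<Rightarrow> arc set" where
  "dep_arcs n k is trow brow =
     {(int x - 2, int x, Black) | x. double_entry is x} \<union>
     {(i - 1, j, if i \<le> 0 then Green else Black) | i j. is_cup n k is trow brow i j}"

definition nested :: "arc \<Rightarrow> arc \<Rightarrow> bool" where
  "nested B' B \<longleftrightarrow> src B \<le> src B' \<and> src B' < tgt B' \<and> tgt B' \<le> tgt B"

fun arc_seq :: "int \<Rightarrow> arc list \<Rightarrow> int \<Rightarrow> bool" where
  "arc_seq a [] b \<longleftrightarrow> a = b"
| "arc_seq a (B # Bs) b \<longleftrightarrow> src B = a \<and> arc_seq (tgt B) Bs b"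

definition black_arc_seq :: "arc set \<Rightarrow> int \<Rightarrow> arc list \<Rightarrow> int \<Rightarrow> bool" where
  "black_arc_seq A a Bs b \<longleftrightarrow> set Bs \<subseteq> A \<and> arc_seq a Bs b \<and> (\<forall>B \<in> set Bs. col B = Black)"

end

theory Submission
  imports Defs
begin

(* Inside a cup (i, j) of eC(S) every point is either a cross, i.e. one of the positions x - 1, x
   of a double entry x, or an endpoint of a cup nested in (i, j), and cups do not cross. Call c
   uncovered if it lies strictly inside neither a double-entry arc (x - 2, x) nor the arc
   (p - 1, q) of a cup (p, q) nested in (i, j). From an uncovered c < j - 1 a black arc leads to
   the next uncovered point: the double-entry arc to c + 2 if c + 1 is a cross, and otherwise the
   arc of the cup whose left end is c + 1 (c + 1 cannot be a right end, since c is uncovered).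
   Walking from i, from 0, or from the right end of the outermost nested green cup gives the three
   claims. This also needs eC(S) to be well defined: the properties above are invariants of the
   joining process, and a cup joined in one run is joined in every terminal state. *)

lemma count_list_le_1_if_sorted_gt:
  "sorted_wrt (>) (xs :: 'a :: order list) \<Longrightarrow> count_list xs x \<le> 1"
  by (induction xs) (auto simp: count_list_0_iff)

lemma double_entry_gap:
  assumes "sorted_wrt (<) is" "double_entry is x" "double_entry is y" "x < y"
  shows "x + 2 \<le> y"
proof -
  obtain l where l: "l < length is" "is ! l = x"
    using assms(2) unfolding double_entry_def by auto
  obtain l' where l': "l' < length is" "is ! l' = y" "is ! l' - prev_entry is l' = 2"
    using assms(3) unfolding double_entry_def by auto
  have "l < l'"
    using assms(4) l l' sorted_wrt_nth_less[OF assms(1), of l' l]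
    by (cases l l' rule: linorder_cases) auto
  then have "prev_entry is l' = is ! (l' - 1)" "is ! l \<le> is ! (l' - 1)"
    using sorted_wrt_nth_less[OF assms(1), of l "l' - 1"] l'(1)
    by (auto simp: prev_entry_def le_less) (cases "l = l' - 1"; simp)
  then show ?thesis
    using l l' by simp
qed

lemma cross_weight_double_entry:
  assumes "std_tableau n k is trow brow" "1 \<le> p" "p \<le> n" "weight is trow brow p = Cross"
  shows "double_entry is p \<or> double_entry is (p + 1)"
proof -
  have "type_seq n is"
    using assms(1) by (simp add: std_tableau_def)
  then have "\<exists>l < length is. p \<le> is ! l"
    using assms(3) by (intro exI[of _ "length is - 1"]) (auto simp: type_seq_def last_conv_nth)
  define l where "l = (LEAST l. l < length is \<and> p \<le> is ! l)"
  have l: "l < length is" "p \<le> is ! l"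
    using LeastI_ex[OF \<open>\<exists>l < length is. p \<le> is ! l\<close>] unfolding l_def by auto
  have prev: "prev_entry is l < p"
    using not_less_Least[of "l - 1" "\<lambda>l. l < length is \<and> p \<le> is ! l"] l(1) assms(2)
    unfolding l_def[symmetric] by (cases "l = 0") (auto simp: prev_entry_def)
  have mult: "count_list (trow @ brow) (is ! l) = is ! l - prev_entry is l"
    using assms(1) l(1) by (simp add: std_tableau_def)
  moreover have "count_list trow (is ! l) \<le> 1" "count_list brow (is ! l) \<le> 1"
    using assms(1) count_list_le_1_if_sorted_gt by (auto simp: std_tableau_def)
  ultimately have "is ! l - prev_entry is l \<le> 2"
    by simp
  then consider "is ! l = p" | "is ! l = p + 1" "is ! l - prev_entry is l = 2"
    using l(2) prev by linarith
  then show ?thesis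
  proof cases
    case 1
    then have "count_list (trow @ brow) p \<noteq> 0"
      using mult prev by simp
    then have "p \<in> set trow \<or> p \<in> set brow"
      by (simp add: count_list_0_iff)
    then show ?thesis
      using assms(4) by (auto simp: weight_def split: if_splits)
  next
    case 2
    then show ?thesis
      using l(1) unfolding double_entry_def by metis
  qed
qed

lemma black_arc_seq_by_stops:
  assumes "\<And>c. c \<in> S \<Longrightarrow> c < b \<Longrightarrow> \<exists>d \<in> S. c < d \<and> d \<le> b \<and> (c, d, Black) \<in> A"
  shows "a \<in> S \<Longrightarrow> a \<le> b \<Longrightarrow> \<exists>Bs. black_arc_seq A a Bs b"
proof (induction "nat (b - a)" arbitrary: a rule: less_induct)
  case less
  show ?case
  proof (cases "a = b")
    case True
    then have "black_arc_seq A a [] b"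
      by (simp add: black_arc_seq_def)
    then show ?thesis ..
  next
    case False
    then obtain d where d: "d \<in> S" "a < d" "d \<le> b" "(a, d, Black) \<in> A"
      using assms less.prems by force
    then obtain Bs where "black_arc_seq A d Bs b"
      using less.hyps[of d] by force
    then have "black_arc_seq A a ((a, d, Black) # Bs) b"
      using d(4) by (simp add: black_arc_seq_def src_def tgt_def col_def)
    then show ?thesis ..
  qed
qed

locale cup_construction =
  fixes n k :: nat and "is" trow brow :: "nat list"
begin

abbreviation label :: "int \<Rightarrow> wt" where
  "label \<equiv> ext_weight is trow brow"

definition joinable :: "(int \<times> int) set \<Rightarrow> int \<Rightarrow> int \<Rightarrow> bool" where
  "joinable C i j \<longleftrightarrow>
     - int (n - 2 * k) + 1 \<le> i \<and> i < j \<and> j \<le> int n \<and> label i = Vee \<and> label j = Wedge \<and>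
     \<not> joined C i \<and> \<not> joined C j \<and> (\<forall>p. i < p \<and> p < j \<longrightarrow> label p = Cross \<or> joined C p)"

lemma cup_step_iff:
  "cup_step n k is trow brow C C' \<longleftrightarrow> (\<exists>i j. joinable C i j \<and> C' = insert (i, j) C)"
  unfolding cup_step_def joinable_def by blast

definition proper_cups :: "(int \<times> int) set \<Rightarrow> bool" where
  "proper_cups C \<longleftrightarrow>
     (\<forall>(i, j) \<in> C. - int (n - 2 * k) + 1 \<le> i \<and> i < j \<and> j \<le> int n \<and>
        label i = Vee \<and> label j = Wedge) \<and>
     (\<forall>(i, j) \<in> C. \<forall>(i', j') \<in> C. i = i' \<or> j = j' \<longrightarrow> i = i' \<and> j = j') \<and>
     (\<forall>(i, j) \<in> C. \<forall>p. i < p \<and> p < j \<and> label p \<noteq> Cross \<longrightarrow> joined C p) \<and>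
     (\<forall>(i, j) \<in> C. \<forall>(i', j') \<in> C. i < i' \<and> i' < j \<longrightarrow> j' < j)"

lemma
  assumes "proper_cups C"
  shows cup_bounds: "(i, j) \<in> C \<Longrightarrow> - int (n - 2 * k) + 1 \<le> i \<and> i < j \<and> j \<le> int n"
    and cup_labels: "(i, j) \<in> C \<Longrightarrow> label i = Vee \<and> label j = Wedge"
    and cup_left_unique: "(i, j) \<in> C \<Longrightarrow> (i, j') \<in> C \<Longrightarrow> j = j'"
    and cup_right_unique: "(i, j) \<in> C \<Longrightarrow> (i', j) \<in> C \<Longrightarrow> i = i'"
    and cup_inside_joined:
      "(i, j) \<in> C \<Longrightarrow> i < p \<Longrightarrow> p < j \<Longrightarrow> label p \<noteq> Cross \<Longrightarrow> joined C p"
    and cups_noncrossing: "(i, j) \<in> C \<Longrightarrow> (i', j') \<in> C \<Longrightarrow> i < i' \<Longrightarrow> i' < j \<Longrightarrow> j' < j"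
  using assms unfolding proper_cups_def by blast+

lemma label_nonpos: "p \<le> 0 \<Longrightarrow> label p = Vee"
  by (simp add: ext_weight_def)

lemma label_Wedge_pos: "label p = Wedge \<Longrightarrow> 0 < p"
  using label_nonpos[of p] by (cases "0 < p") auto

lemma joined_Vee:
  assumes "proper_cups C" "joined C p" "label p = Vee"
  obtains q where "(p, q) \<in> C"
  using assms cup_labels unfolding joined_def by fastforce

lemma joined_Wedge:
  assumes "proper_cups C" "joined C p" "label p = Wedge"
  obtains q where "(q, p) \<in> C"
  using assms cup_labels unfolding joined_def by fastforce

lemma joined_mono: "joined C p \<Longrightarrow> C \<subseteq> C' \<Longrightarrow> joined C' p"
  unfolding joined_def by blast

lemma proper_cups_finite:
  assumes "proper_cups C"
  shows "finite C"
proof (rule finite_subset)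
  show "C \<subseteq> {- int (n - 2 * k) + 1..int n} \<times> {- int (n - 2 * k) + 1..int n}"
    using cup_bounds[OF assms] by fastforce
qed simp

lemma proper_cups_insert:
  assumes C: "proper_cups C" and ij: "joinable C i j"
  shows "proper_cups (insert (i, j) C)"
proof -
  have unjoined: "(i, q) \<notin> C" "(q, i) \<notin> C" "(j, q) \<notin> C" "(q, j) \<notin> C" for q
    using ij unfolding joinable_def joined_def by blast+
  have not_inside_old: "\<not> (a < x \<and> x < b)" if "(a, b) \<in> C" "x \<in> {i, j}" for a b x
    using cup_inside_joined[OF C that(1)] ij that(2) unfolding joinable_def by auto
  have inside_new: "d < j" if "(c, d) \<in> C" "i < c" "c < j" for c d
    using not_inside_old[OF that(1), of j] unjoined(4)[of c] that by (cases "d = j") auto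
  show ?thesis
    unfolding proper_cups_def
  proof (intro conjI)
    show "\<forall>(a, b) \<in> insert (i, j) C. \<forall>p. a < p \<and> p < b \<and> label p \<noteq> Cross \<longrightarrow>
        joined (insert (i, j) C) p"
      using ij cup_inside_joined[OF C] joined_mono[OF _ subset_insertI] unfolding joinable_def
      by fastforce
    show "\<forall>(a, b) \<in> insert (i, j) C. \<forall>(c, d) \<in> insert (i, j) C. a < c \<and> c < b \<longrightarrow> d < b"
      using inside_new not_inside_old cups_noncrossing[OF C] by fastforce
  qed (use ij C unjoined in \<open>auto simp: proper_cups_def joinable_def\<close>)
qed

lemma proper_cups_reachable: "(cup_step n k is trow brow)\<^sup>*\<^sup>* {} C \<Longrightarrow> proper_cups C"
proof (induction rule: rtranclp_induct)
  case base
  then show ?case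
    by (simp add: proper_cups_def)
next
  case (step C C')
  then show ?case
    using proper_cups_insert by (auto simp: cup_step_iff)
qed

context
  fixes C Cf :: "(int \<times> int) set" and i j :: int
  assumes Cf: "proper_cups Cf" and C: "proper_cups C" "C \<subseteq> Cf" and ij: "joinable C i j"
begin

lemma joinable_inner_cup:
  assumes pq: "(p, q) \<in> Cf" and "i < p \<and> p < j \<or> i < q \<and> q < j"
  shows "(p, q) \<in> C"
proof -
  have labels: "label p = Vee" "label q = Wedge"
    using cup_labels[OF Cf pq] by auto
  from assms(2) show ?thesis
  proof (elim disjE conjE)
    assume "i < p" "p < j"
    then have "joined C p"
      using ij labels unfolding joinable_def by auto
    then obtain q' where "(p, q') \<in> C"
      by (rule joined_Vee[OF C(1) _ labels(1)])
    then show ?thesis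
      using cup_left_unique[OF Cf pq] C(2) by blast
  next
    assume "i < q" "q < j"
    then have "joined C q"
      using ij labels unfolding joinable_def by auto
    then obtain p' where "(p', q) \<in> C"
      by (rule joined_Wedge[OF C(1) _ labels(2)])
    then show ?thesis
      using cup_right_unique[OF Cf pq] C(2) by blast
  qed
qed

lemma joinable_left_joined:
  assumes "joined Cf i"
  shows "(i, j) \<in> Cf"
proof -
  have ij': "i < j" "label i = Vee" "label j = Wedge" "\<And>q. (i, q) \<notin> C" "\<And>p. (p, j) \<notin> C"
    using ij unfolding joinable_def joined_def by auto
  obtain q where iq: "(i, q) \<in> Cf"
    by (rule joined_Vee[OF Cf assms ij'(2)])
  consider "q < j" | "q = j" | "j < q"
    by linarith
  then show ?thesis
  proof cases
    case 1
    then show ?thesis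
      using joinable_inner_cup[OF iq] ij'(4) cup_bounds[OF Cf iq] by blast
  next
    case 3
    then have "joined Cf j"
      using cup_inside_joined[OF Cf iq] ij' by simp
    then obtain p where pj: "(p, j) \<in> Cf"
      by (rule joined_Wedge[OF Cf _ ij'(3)])
    consider "p < i" | "p = i" | "i < p"
      by linarith
    then show ?thesis
    proof cases
      case 1
      then show ?thesis
        using cups_noncrossing[OF Cf pj iq] ij'(1) 3 by simp
    next
      case 3
      then show ?thesis
        using joinable_inner_cup[OF pj] ij'(5) cup_bounds[OF Cf pj] by blast
    qed (use pj in simp)
  qed (use iq in simp)
qed

lemma joinable_right_joined:
  assumes "joined Cf j"
  shows "joined Cf i"
proof -
  have ij': "i < j" "label i = Vee" "label j = Wedge" "\<And>p. (p, j) \<notin> C"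
    using ij unfolding joinable_def joined_def by auto
  obtain p where pj: "(p, j) \<in> Cf"
    by (rule joined_Wedge[OF Cf assms ij'(3)])
  consider "p < i" | "p = i" | "i < p"
    by linarith
  then show ?thesis
  proof cases
    case 1
    then show ?thesis
      using cup_inside_joined[OF Cf pj] ij' by simp
  next
    case 2
    then show ?thesis
      using pj unfolding joined_def by blast
  next
    case 3
    then show ?thesis
      using joinable_inner_cup[OF pj] ij'(4) cup_bounds[OF Cf pj] by blast
  qed
qed

(* If neither end were joined in Cf, the pair would still be joinable there. *)
lemma joinable_mem_final:
  assumes "\<nexists>C'. cup_step n k is trow brow Cf C'"
  shows "(i, j) \<in> Cf"
proof (rule ccontr)
  assume "(i, j) \<notin> Cf"
  then have "\<not> joined Cf i" "\<not> joined Cf j"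
    using joinable_left_joined joinable_right_joined by blast+
  then have "joinable Cf i j"
    using ij joined_mono[OF _ C(2)] unfolding joinable_def by blast
  then show False
    using assms by (auto simp: cup_step_iff)
qed

end

lemma reachable_subset_final:
  assumes "proper_cups Cf" "\<nexists>C'. cup_step n k is trow brow Cf C'"
  shows "(cup_step n k is trow brow)\<^sup>*\<^sup>* {} C \<Longrightarrow> C \<subseteq> Cf"
proof (induction rule: rtranclp_induct)
  case (step C C')
  then obtain i j where "joinable C i j" "C' = insert (i, j) C"
    by (auto simp: cup_step_iff)
  then show ?case
    using joinable_mem_final[OF assms(1) proper_cups_reachable[OF step.hyps(1)] step.IH _ assms(2)]
      step.IH by simp
qed simp

lemma final_cups_proper: "final_cups n k is trow brow C \<Longrightarrow> proper_cups C"
  unfolding final_cups_def using proper_cups_reachable by blast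

lemma final_cups_unique:
  assumes "final_cups n k is trow brow C" "final_cups n k is trow brow C'"
  shows "C = C'"
  using assms reachable_subset_final[OF final_cups_proper] unfolding final_cups_def
  by (metis subset_antisym)

lemma is_cup_iff:
  assumes "final_cups n k is trow brow C"
  shows "is_cup n k is trow brow i j \<longleftrightarrow> (i, j) \<in> C"
  using assms final_cups_unique unfolding is_cup_def by blast

end

locale standard_tableau = cup_construction +
  assumes std: "std_tableau n k is trow brow"
begin

abbreviation arcs :: "arc set" where
  "arcs \<equiv> dep_arcs n k is trow brow"

lemma type_strictly_sorted: "sorted_wrt (<) is"
  using std by (simp add: std_tableau_def type_seq_def)

lemma double_entry_label:
  assumes "double_entry is x"
  shows "label (int x) = Cross" "label (int x - 1) = Cross"
proof -
  have "2 \<le> x"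
    using assms unfolding double_entry_def by auto
  moreover have "nat (int x - 1) + 1 = x"
    using \<open>2 \<le> x\<close> by simp
  ultimately show "label (int x) = Cross" "label (int x - 1) = Cross"
    using assms by (auto simp: ext_weight_def weight_def)
qed

lemma label_Cross_iff:
  assumes "p \<le> int n"
  shows "label p = Cross \<longleftrightarrow> (\<exists>x. double_entry is x \<and> (p = int x \<or> p = int x - 1))"
proof
  assume cross: "label p = Cross"
  then have "0 < p"
    using label_nonpos[of p] by (cases "0 < p") auto
  then have "double_entry is (nat p) \<or> double_entry is (nat p + 1)"
    using cross assms cross_weight_double_entry[OF std, of "nat p"] by (simp add: ext_weight_def)
  then show "\<exists>x. double_entry is x \<and> (p = int x \<or> p = int x - 1)"
  proof
    assume "double_entry is (nat p)"
    then show ?thesis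
      using \<open>0 < p\<close> by (intro exI[of _ "nat p"]) simp
  next
    assume "double_entry is (nat p + 1)"
    then show ?thesis
      using \<open>0 < p\<close> by (intro exI[of _ "nat p + 1"]) simp
  qed
qed (use double_entry_label in blast)

lemma double_entry_arc: "double_entry is x \<Longrightarrow> (int x - 2, int x, Black) \<in> arcs"
  unfolding dep_arcs_def by blast

lemma cup_arc:
  "final_cups n k is trow brow C \<Longrightarrow> (i, j) \<in> C \<Longrightarrow>
     (i - 1, j, if i \<le> 0 then Green else Black) \<in> arcs"
  unfolding dep_arcs_def using is_cup_iff by blast

definition uncovered :: "(int \<times> int) set \<Rightarrow> int \<Rightarrow> int \<Rightarrow> bool" where
  "uncovered C i c \<longleftrightarrow>
     (\<forall>x. double_entry is x \<longrightarrow> c \<noteq> int x - 1) \<and>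
     (\<forall>p q. (p, q) \<in> C \<longrightarrow> i < p \<longrightarrow> p \<le> c \<longrightarrow> q \<le> c)"

context
  fixes C :: "(int \<times> int) set" and i j c :: int
  assumes C: "final_cups n k is trow brow C" and ij: "(i, j) \<in> C"
    and c: "i \<le> c" "c + 1 < j" "uncovered C i c"
begin

lemma uncovered_after_double_entry:
  assumes "label (c + 1) = Cross"
  shows "c + 2 < j" "uncovered C i (c + 2)" "(c, c + 2, Black) \<in> arcs"
proof -
  have P: "proper_cups C"
    using final_cups_proper[OF C] .
  have j: "j \<le> int n" "label j = Wedge"
    using cup_bounds[OF P ij] cup_labels[OF P ij] by auto
  obtain x where x: "double_entry is x" "c + 1 = int x \<or> c + 1 = int x - 1"
    using label_Cross_iff[of "c + 1"] assms j(1) c(2) by auto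
  then have x_eq: "int x = c + 2"
    using c(3) unfolding uncovered_def by force
  have x_cross: "label (int x) = Cross" "label (int x - 1) = Cross"
    using double_entry_label[OF x(1)] .
  then have "int x \<noteq> j"
    using j(2) by auto
  then show "c + 2 < j"
    using x_eq c(2) by simp
  show "(c, c + 2, Black) \<in> arcs"
    using double_entry_arc[OF x(1)] x_eq by simp
  show "uncovered C i (c + 2)"
    unfolding uncovered_def x_eq[symmetric]
  proof (intro conjI allI impI)
    show "int x \<noteq> int y - 1" if "double_entry is y" for y
      using double_entry_gap[OF type_strictly_sorted x(1) that]
        double_entry_gap[OF type_strictly_sorted that x(1)]
      by (cases x y rule: linorder_cases) auto
    show "q \<le> int x" if pq: "(p, q) \<in> C" "i < p" "p \<le> int x" for p q
    proof -
      have "p \<noteq> int x" "p \<noteq> int x - 1"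
        using cup_labels[OF P pq(1)] x_cross by auto
      then have "p \<le> c"
        using pq(3) x_eq by linarith
      then show ?thesis
        using c(3) pq(1,2) x_eq unfolding uncovered_def by force
    qed
  qed
qed

lemma uncovered_after_cup:
  assumes cd: "(c + 1, d) \<in> C"
  shows "d < j" "uncovered C i d"
proof -
  have P: "proper_cups C"
    using final_cups_proper[OF C] .
  show "d < j"
    using cups_noncrossing[OF P ij cd] c by simp
  have "c < d"
    using cup_bounds[OF P cd] by simp
  show "uncovered C i d"
    unfolding uncovered_def
  proof (intro conjI allI impI)
    show "d \<noteq> int x - 1" if "double_entry is x" for x
      using double_entry_label[OF that] cup_labels[OF P cd] by auto
    show "q \<le> d" if pq: "(p, q) \<in> C" "i < p" "p \<le> d" for p q
    proof -
      consider "p \<le> c" | "p = c + 1" | "c + 1 < p" "p < d" | "p = d"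
        using pq(3) by linarith
      then show ?thesis
      proof cases
        case 1
        then show ?thesis
          using c(3) pq(1,2) \<open>c < d\<close> unfolding uncovered_def by force
      next
        case 2
        then show ?thesis
          using cup_left_unique[OF P cd] pq(1) by simp
      next
        case 3
        then show ?thesis
          using cups_noncrossing[OF P cd pq(1)] by simp
      next
        case 4
        then show ?thesis
          using cup_labels[OF P cd] cup_labels[OF P pq(1)] by simp
      qed
    qed
  qed
qed

lemma label_after_uncovered_not_Wedge: "label (c + 1) \<noteq> Wedge"
proof
  assume wedge: "label (c + 1) = Wedge"
  have P: "proper_cups C"
    using final_cups_proper[OF C] .
  have "joined C (c + 1)"
    using cup_inside_joined[OF P ij, of "c + 1"] c wedge by simp
  then obtain p where pc: "(p, c + 1) \<in> C"
    using joined_Wedge[OF P _ wedge] by blast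
  consider "p < i" | "p = i" | "i < p"
    by linarith
  then show False
  proof cases
    case 1
    then show False
      using cups_noncrossing[OF P pc ij] c by simp
  next
    case 2
    then show False
      using cup_left_unique[OF P ij] pc c(2) by simp
  next
    case 3
    then show False
      using c(3) pc cup_bounds[OF P pc] unfolding uncovered_def by force
  qed
qed

lemma uncovered_next:
  assumes "0 \<le> c"
  obtains d where "c < d" "d < j" "uncovered C i d" "(c, d, Black) \<in> arcs"
proof -
  have P: "proper_cups C"
    using final_cups_proper[OF C] .
  consider "label (c + 1) = Cross" | "label (c + 1) = Vee"
    using label_after_uncovered_not_Wedge by (cases "label (c + 1)") auto
  then show ?thesis
  proof cases
    case 1
    then show ?thesis
      using that[of "c + 2"] uncovered_after_double_entry by simp
  next
    case 2
    moreover have "joined C (c + 1)"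
      using cup_inside_joined[OF P ij, of "c + 1"] c 2 by simp
    ultimately obtain d where cd: "(c + 1, d) \<in> C"
      using joined_Vee[OF P] by blast
    moreover have "(c, d, Black) \<in> arcs"
      using cup_arc[OF C cd] assms by simp
    ultimately show ?thesis
      using that[of d] uncovered_after_cup[OF cd] cup_bounds[OF P cd] by simp
  qed
qed

end

lemma black_arc_seq_under_cup:
  assumes C: "final_cups n k is trow brow C" and ij: "(i, j) \<in> C"
    and s: "0 \<le> s" "i \<le> s" "s < j" "label s \<noteq> Cross"
    and no_straddle: "\<And>p q. (p, q) \<in> C \<Longrightarrow> i < p \<Longrightarrow> p \<le> s \<Longrightarrow> q \<le> s"
  shows "\<exists>Bs. black_arc_seq arcs s Bs (j - 1)"
proof (rule black_arc_seq_by_stops)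
  let ?S = "{c. s \<le> c \<and> c < j \<and> uncovered C i c}"
  have "j \<le> int n"
    using cup_bounds[OF final_cups_proper[OF C] ij] by simp
  then have "uncovered C i s"
    using s(3,4) double_entry_label no_straddle unfolding uncovered_def by fastforce
  then show "s \<in> ?S"
    using s(3) by simp
  show "\<exists>d \<in> ?S. c < d \<and> d \<le> j - 1 \<and> (c, d, Black) \<in> arcs" if c: "c \<in> ?S" "c < j - 1" for c
  proof -
    obtain d where "c < d" "d < j" "uncovered C i d" "(c, d, Black) \<in> arcs"
      using uncovered_next[OF C ij, of c] c s by auto
    then show ?thesis
      using c by (intro bexI[of _ d]) auto
  qed
qed (use s in simp)

lemma black_arc_seq_under_black_arc:
  assumes "B \<in> arcs" "col B = Black" "bval B > 1"
  shows "\<exists>Bs. black_arc_seq arcs (src B + 1) Bs (tgt B - 1)"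
proof -
  have "bval (int x - 2, int x, Black) = 1" for x
    by (simp add: bval_def src_def tgt_def)
  then obtain i j where "is_cup n k is trow brow i j" and B: "B = (i - 1, j, Black)" "0 < i"
    using assms unfolding dep_arcs_def by (auto simp: col_def split: if_splits)
  then obtain C where C: "final_cups n k is trow brow C" "(i, j) \<in> C"
    unfolding is_cup_def by blast
  have "i < j" "label i = Vee"
    using cup_bounds[OF final_cups_proper, OF C] cup_labels[OF final_cups_proper, OF C] by auto
  then have "\<exists>Bs. black_arc_seq arcs i Bs (j - 1)"
    using black_arc_seq_under_cup[OF C, of i] B(2) by auto
  then show ?thesis
    using B by (simp add: src_def tgt_def)
qed

lemma green_arcE:
  assumes "B \<in> arcs" "col B = Green"
  obtains C i j
    where "final_cups n k is trow brow C" "(i, j) \<in> C" "i \<le> 0" "B = (i - 1, j, Green)"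
proof -
  obtain i j where "is_cup n k is trow brow i j" "i \<le> 0" "B = (i - 1, j, Green)"
    using assms unfolding dep_arcs_def by (auto simp: col_def split: if_splits)
  then show ?thesis
    using that unfolding is_cup_def by blast
qed

lemma green_nested_arcs:
  assumes C: "final_cups n k is trow brow C" and ij: "(i, j) \<in> C" and "i \<le> 0"
  shows "{B' \<in> arcs. col B' = Green \<and> B' \<noteq> (i - 1, j, Green) \<and> nested B' (i - 1, j, Green)}
       = (\<lambda>(p, q). (p - 1, q, Green)) ` {(p, q) \<in> C. i < p \<and> p \<le> 0}"
    (is "?G = ?H")
proof -
  have P: "proper_cups C"
    using final_cups_proper[OF C] .
  have "0 < j"
    using cup_labels[OF P ij] label_Wedge_pos by simp
  show ?thesis
  proof (intro equalityI subsetI)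
    fix B' assume B': "B' \<in> ?G"
    then have "B' \<in> arcs" "col B' = Green"
      by auto
    then obtain C' p q where "final_cups n k is trow brow C'" "(p, q) \<in> C'" "p \<le> 0"
      "B' = (p - 1, q, Green)"
      by (rule green_arcE)
    then have pq: "(p, q) \<in> C" "p \<le> 0" "B' = (p - 1, q, Green)"
      "B' \<noteq> (i - 1, j, Green)" "nested B' (i - 1, j, Green)"
      using final_cups_unique[OF C] B' by auto
    then have "p \<noteq> i"
      using cup_left_unique[OF P ij] by blast
    then have "i < p"
      using pq(3,5) by (simp add: nested_def src_def tgt_def)
    then show "B' \<in> ?H"
      using pq by force
  next
    fix B' assume "B' \<in> ?H"
    then obtain p q where pq: "(p, q) \<in> C" "i < p" "p \<le> 0" "B' = (p - 1, q, Green)"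
      by fastforce
    moreover have "q < j" "p < q"
      using cups_noncrossing[OF P ij pq(1)] cup_bounds[OF P pq(1)] pq(2,3) \<open>0 < j\<close> by auto
    moreover have "(p - 1, q, Green) \<in> arcs"
      using cup_arc[OF C pq(1)] pq(3) by simp
    ultimately show "B' \<in> ?G"
      by (auto simp: nested_def src_def tgt_def col_def)
  qed
qed

lemma black_arc_seq_green_innermost:
  assumes C: "final_cups n k is trow brow C" and ij: "(i, j) \<in> C" and "i \<le> 0"
    and innermost: "{(p, q) \<in> C. i < p \<and> p \<le> 0} = {}"
  shows "\<exists>Bs. black_arc_seq arcs 0 Bs (j - 1)"
proof -
  have P: "proper_cups C"
    using final_cups_proper[OF C] .
  have "0 < j"
    using cup_labels[OF P ij] label_Wedge_pos by simp
  have "i = 0"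
  proof (rule ccontr)
    assume "i \<noteq> 0"
    then have "label (i + 1) = Vee" "i + 1 < j"
      using \<open>i \<le> 0\<close> \<open>0 < j\<close> label_nonpos by auto
    then have "joined C (i + 1)"
      using cup_inside_joined[OF P ij] by simp
    then obtain q where "(i + 1, q) \<in> C"
      using joined_Vee[OF P _ \<open>label (i + 1) = Vee\<close>] by blast
    then have "(i + 1, q) \<in> {(p, q) \<in> C. i < p \<and> p \<le> 0}"
      using \<open>i \<le> 0\<close> \<open>i \<noteq> 0\<close> by simp
    then show False
      using innermost by blast
  qed
  then show ?thesis
    using black_arc_seq_under_cup[OF C ij, of 0] \<open>0 < j\<close> label_nonpos[of 0] by simp
qed

lemma black_arc_seq_green_nested:
  assumes C: "final_cups n k is trow brow C" and ij: "(i, j) \<in> C"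
    and G: "G = {(p, q) \<in> C. i < p \<and> p \<le> 0}" "G \<noteq> {}"
  shows "\<exists>Bs. black_arc_seq arcs (Max (snd ` G)) Bs (j - 1)"
proof -
  let ?M = "Max (snd ` G)"
  have P: "proper_cups C"
    using final_cups_proper[OF C] .
  have "G \<subseteq> C"
    using G(1) by auto
  then have "finite (snd ` G)"
    using proper_cups_finite[OF P] by (simp add: finite_subset)
  then have M_max: "q \<le> ?M" if "(p, q) \<in> G" for p q
    using that by (simp add: rev_image_eqI)
  obtain i' where "(i', ?M) \<in> G"
    using Max_in[OF \<open>finite (snd ` G)\<close>] G(2) by fastforce
  then have M: "(i', ?M) \<in> C" "i < i'" "i' \<le> 0"
    using G(1) by auto
  then have M_label: "label ?M = Wedge" "0 < ?M"
    using cup_labels[OF P] label_Wedge_pos by auto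
  have "?M < j"
    using cups_noncrossing[OF P ij M(1)] M(2,3) cup_labels[OF P ij] label_Wedge_pos by fastforce
  moreover have "q \<le> ?M" if pq: "(p, q) \<in> C" "i < p" "p \<le> ?M" for p q
  proof (cases "p \<le> 0")
    case True
    then show ?thesis
      using M_max pq G(1) by blast
  next
    case False
    moreover have "p \<noteq> ?M"
      using cup_labels[OF P pq(1)] M_label by auto
    ultimately show ?thesis
      using cups_noncrossing[OF P M(1) pq(1)] M(3) pq(3) by simp
  qed
  ultimately show ?thesis
    using black_arc_seq_under_cup[OF C ij, of ?M] M M_label by simp
qed

lemma black_arc_seq_under_green_arc:
  assumes "B \<in> arcs" "col B = Green"
  shows "let G = {B' \<in> arcs. col B' = Green \<and> B' \<noteq> B \<and> nested B' B} in
           (G = {} \<longrightarrow> (\<exists>Bs. black_arc_seq arcs 0 Bs (tgt B - 1))) \<and>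
           (G \<noteq> {} \<longrightarrow> (\<exists>Bs. black_arc_seq arcs (Max (tgt ` G)) Bs (tgt B - 1)))"
proof -
  obtain C i j where C: "final_cups n k is trow brow C" "(i, j) \<in> C" "i \<le> 0"
    and B: "B = (i - 1, j, Green)"
    using green_arcE[OF assms] .
  define G where "G = {(p, q) \<in> C. i < p \<and> p \<le> 0}"
  have "tgt ` (\<lambda>(p, q). (p - 1, q, Green)) ` G = snd ` G"
    by (force simp: tgt_def)
  then show ?thesis
    using green_nested_arcs[OF C] black_arc_seq_green_innermost[OF C]
      black_arc_seq_green_nested[OF C(1,2) G_def]
    unfolding B G_def Let_def by (simp add: tgt_def)
qed

end

theorem proposition6p9:
  fixes n k :: nat and "is" trow brow :: "nat list"
  assumes "2 * k \<le> n"
    and "std_tableau n k is trow brow"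
  defines "A \<equiv> dep_arcs n k is trow brow"
  shows "(\<forall>B \<in> A. col B = Black \<and> bval B > 1 \<longrightarrow>
            (\<exists>Bs. black_arc_seq A (src B + 1) Bs (tgt B - 1)))
       \<and> (\<forall>B \<in> A. col B = Green \<and> bval B > 1 \<longrightarrow>
            (let G = {B' \<in> A. col B' = Green \<and> B' \<noteq> B \<and> nested B' B} in
              (G = {} \<longrightarrow> (\<exists>Bs. black_arc_seq A 0 Bs (tgt B - 1))) \<and>
              (G \<noteq> {} \<longrightarrow> (\<exists>Bs. black_arc_seq A (Max (tgt ` G)) Bs (tgt B - 1)))))"
proof -
  interpret standard_tableau n k "is" trow brow
    using assms(2) by unfold_locales
  show ?thesis
    unfolding A_def using black_arc_seq_under_black_arc black_arc_seq_under_green_arc by blast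
qed

end
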